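(* Let $n\ge1$ and consider the block decomposition $\{X_j\}_{j\le n}$ of $\mathbb R^n$ with the metric $d_1$. Then for every nonempty $J\subseteq\{0,1,\dots,n\}$ and every $R>0$, $$\bigcap_{j\in J}N_1(X_j,R)\subseteq N_1\Big(\bigcap_{j\in J}X_j,nR\Big);$$ in particular the block decomposition is coarsely excisive for $d_1$.
   Context: $d_1(x,y)=\sum_{j<n}|x_j-y_j|$ on $\mathbb R^n$ and $N_1(Y,R)=\{x:\inf_{y\in Y}d_1(x,y)\le R\}$. The block decomposition of $\mathbb R^n$ consists of the $n+1$ sets $X_0=(-\infty,0]\times\mathbb R^{n-1}$, $X_j=[0,\infty)^j\times(-\infty,0]\times\mathbb R^{n-j-1}$ for $0<j<n$, and $X_n=[0,\infty)^n$. *)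

theory Defs
  imports "HOL-Analysis.Analysis"
begin

text \<open>Points of R^n are represented as functions nat => real vanishing at indices >= n;
  coordinates are x 0, ..., x (n-1).\<close>

definition Rn :: "nat \<Rightarrow> (nat \<Rightarrow> real) set" where
  "Rn n = {x. \<forall>i\<ge>n. x i = 0}"

definition d1 :: "nat \<Rightarrow> (nat \<Rightarrow> real) \<Rightarrow> (nat \<Rightarrow> real) \<Rightarrow> real" where
  "d1 n x y = (\<Sum>j<n. \<bar>x j - y j\<bar>)"

definition N1 :: "nat \<Rightarrow> (nat \<Rightarrow> real) set \<Rightarrow> real \<Rightarrow> (nat \<Rightarrow> real) set" where
  "N1 n Y R = {x \<in> Rn n. Inf (d1 n x ` Y) \<le> R}"

definition block :: "nat \<Rightarrow> nat \<Rightarrow> (nat \<Rightarrow> real) set" where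
  "block n j = {x \<in> Rn n. (\<forall>i<j. 0 \<le> x i) \<and> (j < n \<longrightarrow> x j \<le> 0)}"

end

theory Submission
  imports Defs
begin

text \<open>The quantity \<open>block_excess n j x = \<Sum>\<^sub>i\<^sub><\<^sub>j (-x\<^sub>i)\<^sup>+ + (x\<^sub>j)\<^sup>+\<close> bounds the \<open>d\<^sub>1\<close>-distance from \<open>x\<close>
  to the block \<open>X\<^sub>j\<close> from below, so it is at most \<open>R\<close> on \<open>N\<^sub>1(X\<^sub>j,R)\<close>. Let \<open>M = max J\<close>. Moving
  \<open>x\<close> into \<open>\<Inter>\<^sub>j\<^sub>\<in>\<^sub>J X\<^sub>j\<close> costs \<open>(x\<^sub>i)\<^sup>+\<close> at the coordinates \<open>i \<in> J - {M}\<close> and \<open>block_excess n M x\<close> for the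
  rest, hence at most \<open>|J| R\<close>. This is \<open>\<le> nR\<close> unless \<open>J = {0..n}\<close>; then the intersection is \<open>{0}\<close>,
  and \<open>|x\<^sub>i| \<le> R\<close> for every \<open>i\<close>, because \<open>(x\<^sub>i)\<^sup>+\<close> is bounded by the excess over \<open>X\<^sub>i\<close> and \<open>(-x\<^sub>i)\<^sup>+\<close>
  by the excess over \<open>X\<^sub>n\<close>.\<close>

lemma d1_nonneg: "0 \<le> d1 n x y"
  unfolding d1_def by (simp add: sum_nonneg)

lemma mem_N1I:
  assumes "x \<in> Rn n" and "y \<in> Y" and "d1 n x y \<le> R"
  shows "x \<in> N1 n Y R"
proof -
  have "Inf (d1 n x ` Y) \<le> d1 n x y"
    using assms(2) by (intro cInf_lower bdd_belowI[of _ 0]) (auto simp: d1_nonneg)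
  with assms show ?thesis
    unfolding N1_def by simp
qed

lemma le_radius_if_mem_N1:
  assumes "x \<in> N1 n Y R" and "Y \<noteq> {}" and "\<And>y. y \<in> Y \<Longrightarrow> c \<le> d1 n x y"
  shows "c \<le> R"
proof -
  have "c \<le> Inf (d1 n x ` Y)"
    using assms(2,3) by (auto intro!: cInf_greatest)
  with assms(1) show ?thesis
    unfolding N1_def by simp
qed

lemma zero_mem_block: "(\<lambda>_. 0) \<in> block n j"
  unfolding block_def Rn_def by simp

definition block_excess :: "nat \<Rightarrow> nat \<Rightarrow> (nat \<Rightarrow> real) \<Rightarrow> real" where
  "block_excess n j x =
     (\<Sum>i<n. if i < j then max (- x i) 0 else if i = j then max (x i) 0 else 0)"

lemma block_excess_le_d1:
  assumes "y \<in> block n j"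
  shows "block_excess n j x \<le> d1 n x y"
  unfolding block_excess_def d1_def
  using assms by (intro sum_mono) (auto simp: block_def)

lemma block_excess_le_if_mem_N1:
  assumes "x \<in> N1 n (block n j) R"
  shows "block_excess n j x \<le> R"
  by (rule le_radius_if_mem_N1[OF assms]) (use zero_mem_block block_excess_le_d1 in blast)+

lemma block_excess_term_le:
  assumes "i < n"
  shows "(if i < j then max (- x i) 0 else if i = j then max (x i) 0 else 0) \<le> block_excess n j x"
  unfolding block_excess_def using assms
  by (intro member_le_sum[where f = "\<lambda>i. if i < j then max (- x i) 0 else if i = j then max (x i) 0 else 0"])
    auto

lemma pos_part_le_block_excess:
  assumes "j < n"
  shows "max (x j) 0 \<le> block_excess n j x"
  using block_excess_term_le[OF assms, of j x] by simp

lemma neg_part_le_block_excess: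
  assumes "i < n" and "i < j"
  shows "max (- x i) 0 \<le> block_excess n j x"
  using block_excess_term_le[OF assms(1), of j x] assms(2) by simp

text \<open>A \<open>d\<^sub>1\<close>-nearest point of \<open>\<Inter>\<^sub>j\<^sub>\<in>\<^sub>J X\<^sub>j\<close> to \<open>x\<close>.\<close>
definition block_proj :: "nat \<Rightarrow> nat set \<Rightarrow> (nat \<Rightarrow> real) \<Rightarrow> nat \<Rightarrow> real" where
  "block_proj n J x i =
     (if n \<le> i then 0
      else if i < Max J then (if i \<in> J then 0 else max (x i) 0)
      else if i = Max J then min (x i) 0
      else x i)"

lemma less_if_mem_remove_Max:
  assumes "finite J" and "J \<subseteq> {..n}" and "j \<in> J - {Max J}"
  shows "j < n"
proof -
  have "j < Max J"
    using Max_ge[OF assms(1), of j] assms(3) by (auto simp del: Max_less_iff)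
  moreover have "Max J \<in> J"
    using assms(1,3) by (intro Max_in) auto
  ultimately show ?thesis
    using assms(2) by fastforce
qed

lemma block_proj_mem:
  assumes "finite J" and "j \<in> J"
  shows "block_proj n J x \<in> block n j"
proof -
  have "j < Max J \<or> j = Max J"
    using Max_ge[OF assms] by linarith
  then show ?thesis
    using assms unfolding block_def Rn_def block_proj_def by auto
qed

lemma d1_block_proj:
  assumes "finite J" and "J \<subseteq> {..n}" and "J \<noteq> {}"
  shows "d1 n x (block_proj n J x) = block_excess n (Max J) x + (\<Sum>j\<in>J - {Max J}. max (x j) 0)"
proof -
  let ?M = "Max J"
  have below_n: "J - {?M} \<subseteq> {..<n}"
    using less_if_mem_remove_Max[OF assms(1,2)] by blast
  have "d1 n x (block_proj n J x) =
      (\<Sum>i<n. (if i < ?M then max (- x i) 0 else if i = ?M then max (x i) 0 else 0)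
           + (if i \<in> J - {?M} then max (x i) 0 else 0))"
    unfolding d1_def
  proof (rule sum.cong[OF refl])
    fix i assume "i \<in> {..<n}"
    moreover have "i \<in> J \<Longrightarrow> i \<le> ?M"
      using assms(1) by simp
    ultimately show "\<bar>x i - block_proj n J x i\<bar> =
        (if i < ?M then max (- x i) 0 else if i = ?M then max (x i) 0 else 0)
        + (if i \<in> J - {?M} then max (x i) 0 else 0)"
      unfolding block_proj_def by (auto simp: max_def min_def)
  qed
  also have "\<dots> = block_excess n ?M x + (\<Sum>i<n. if i \<in> J - {?M} then max (x i) 0 else 0)"
    unfolding block_excess_def sum.distrib ..
  also have "(\<Sum>i<n. if i \<in> J - {?M} then max (x i) 0 else 0) = (\<Sum>j\<in>J - {?M}. max (x j) 0)"
    using sum.inter_restrict[of "{..<n}" "\<lambda>i. max (x i) 0" "J - {?M}"] below_n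
    by (simp add: Int_absorb1)
  finally show ?thesis .
qed

lemma d1_block_proj_le:
  assumes "finite J" and "J \<subseteq> {..n}" and "J \<noteq> {}"
    and x: "x \<in> (\<Inter>j\<in>J. N1 n (block n j) R)"
  shows "d1 n x (block_proj n J x) \<le> real (card J) * R"
proof -
  let ?M = "Max J"
  have M: "?M \<in> J"
    using assms(1,3) by simp
  have "max (x j) 0 \<le> R" if "j \<in> J - {?M}" for j
  proof -
    have "max (x j) 0 \<le> block_excess n j x"
      by (rule pos_part_le_block_excess[OF less_if_mem_remove_Max[OF assms(1,2) that]])
    also have "\<dots> \<le> R"
      using block_excess_le_if_mem_N1 x that by blast
    finally show ?thesis .
  qed
  then have "(\<Sum>j\<in>J - {?M}. max (x j) 0) \<le> real (card J - 1) * R"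
    using sum_bounded_above[of "J - {?M}" "\<lambda>j. max (x j) 0" R] M assms(1) by simp
  moreover have "block_excess n ?M x \<le> R"
    using block_excess_le_if_mem_N1 x M by blast
  moreover have "R + real (card J - 1) * R = real (card J) * R"
    using M assms(1) by (cases "card J") (auto simp: algebra_simps)
  ultimately show ?thesis
    using d1_block_proj[OF assms(1-3), of x] by linarith
qed

lemma d1_zero_le_if_mem_all_N1:
  assumes x: "x \<in> (\<Inter>j\<le>n. N1 n (block n j) R)"
  shows "d1 n x (\<lambda>_. 0) \<le> real n * R"
proof -
  have "\<bar>x i\<bar> \<le> R" if "i < n" for i
  proof -
    have "x \<in> N1 n (block n i) R" and "x \<in> N1 n (block n n) R"
      using x that by auto
    then have "block_excess n i x \<le> R" and "block_excess n n x \<le> R"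
      by (simp_all add: block_excess_le_if_mem_N1)
    then have "max (x i) 0 \<le> R" and "max (- x i) 0 \<le> R"
      using pos_part_le_block_excess[OF that, of x] neg_part_le_block_excess[OF that that, of x]
      by linarith+
    then show ?thesis
      by linarith
  qed
  then show ?thesis
    unfolding d1_def using sum_bounded_above[of "{..<n}" "\<lambda>i. \<bar>x i\<bar>" R] by simp
qed

theorem proposition5p6p17:
  fixes n :: nat and J :: "nat set" and R :: real
  assumes "1 \<le> n" and "J \<subseteq> {..n}" and "J \<noteq> {}" and "0 < R"
  shows "(\<Inter>j\<in>J. N1 n (block n j) R) \<subseteq> N1 n (\<Inter>j\<in>J. block n j) (real n * R)"
proof
  fix x assume x: "x \<in> (\<Inter>j\<in>J. N1 n (block n j) R)"
  have fin: "finite J"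
    using assms(2) finite_subset by blast
  have "x \<in> Rn n"
    using x assms(3) by (auto simp: N1_def)
  moreover obtain y where "y \<in> (\<Inter>j\<in>J. block n j)" and "d1 n x y \<le> real n * R"
  proof (cases "card J \<le> n")
    case True
    have "real (card J) * R \<le> real n * R"
      using True assms(4) by simp
    with d1_block_proj_le[OF fin assms(2,3) x] show ?thesis
      using that[of "block_proj n J x"] block_proj_mem[OF fin] by auto
  next
    case False
    then have "J = {..n}"
      using card_subset_eq[OF _ assms(2)] card_mono[OF _ assms(2)] by fastforce
    then have "x \<in> (\<Inter>j\<le>n. N1 n (block n j) R)"
      using x by simp
    then show ?thesis
      using that[of "\<lambda>_. 0"] zero_mem_block d1_zero_le_if_mem_all_N1 by blast
  qed
  ultimately show "x \<in> N1 n (\<Inter>j\<in>J. block n j) (real n * R)"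
    by (rule mem_N1I)
qed

end
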